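(* Let $m>0$. There is a constant $C_2>0$ such that for every $\varepsilon\in(0,1]$ and every $\bar x\in\mathbb{R}^4$, $$|\overline{\mathcal{G}}_\varepsilon(\bar x)-\widetilde{\mathcal{G}}_\varepsilon(\bar x)|\le C_2.$$
   Context: For $\varepsilon\in(0,1]$ and $(x,z)\in\mathbb{R}^2\times\mathbb{R}^2$, with $k=(k_1,k_2)$: $$\overline{\mathcal{G}}_\varepsilon(x,z)=\frac1{(2\pi)^4}\int_{\mathbb{R}^4}\frac{\sin^2(\varepsilon k_1/2)\sin^2(\varepsilon k_2/2)}{\varepsilon^4k_1^2k_2^2}\cdot\frac{e^{-i(x\cdot y+k\cdot z)}}{\big(|y|^2+4\varepsilon^{-2}\sin^2(\varepsilon k_1/2)+4\varepsilon^{-2}\sin^2(\varepsilon k_2/2)+m^2\big)^2}\,\mathrm{d}y\,\mathrm{d}k,$$ $$\widetilde{\mathcal{G}}_\varepsilon(x,z)=\frac1{(2\pi)^4}\int_{\mathbb{R}^4}\frac{\sin^2(\varepsilon k_1/2)\sin^2(\varepsilon k_2/2)}{\varepsilon^4k_1^2k_2^2}\cdot\frac{e^{-i(x\cdot y+k\cdot z)}}{(|y|^2+|k|^2+m^2)^2}\,\mathrm{d}y\,\mathrm{d}k.$$ *)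

theory Defs
  imports "HOL-Analysis.Analysis"
begin

text \<open>Points of R^2 are represented as pairs real \<times> real; R^4 = R^2 \<times> R^2,
  with Lebesgue measure lborel on the product type (which is the product measure).\<close>

definition sinc_factor :: "real \<Rightarrow> real \<Rightarrow> real \<Rightarrow> real" where
  "sinc_factor \<epsilon> k1 k2 =
     (sin (\<epsilon> * k1 / 2))\<^sup>2 * (sin (\<epsilon> * k2 / 2))\<^sup>2 / (\<epsilon> ^ 4 * k1\<^sup>2 * k2\<^sup>2)"

definition Gbar :: "real \<Rightarrow> real \<Rightarrow> real \<times> real \<Rightarrow> real \<times> real \<Rightarrow> complex" where
  "Gbar m \<epsilon> x z = complex_of_real (1 / (2 * pi) ^ 4) *
     (LINT p|lborel.
        (case p of (y, (k1, k2)) \<Rightarrow>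
          complex_of_real (sinc_factor \<epsilon> k1 k2) *
          exp (- \<i> * complex_of_real (x \<bullet> y + (k1, k2) \<bullet> z)) /
          complex_of_real ((norm y ^ 2 + 4 / \<epsilon>\<^sup>2 * (sin (\<epsilon> * k1 / 2))\<^sup>2
                              + 4 / \<epsilon>\<^sup>2 * (sin (\<epsilon> * k2 / 2))\<^sup>2 + m\<^sup>2) ^ 2)))"

definition Gtilde :: "real \<Rightarrow> real \<Rightarrow> real \<times> real \<Rightarrow> real \<times> real \<Rightarrow> complex" where
  "Gtilde m \<epsilon> x z = complex_of_real (1 / (2 * pi) ^ 4) *
     (LINT p|lborel.
        (case p of (y, (k1, k2)) \<Rightarrow>
          complex_of_real (sinc_factor \<epsilon> k1 k2) *
          exp (- \<i> * complex_of_real (x \<bullet> y + (k1, k2) \<bullet> z)) /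
          complex_of_real ((norm y ^ 2 + norm (k1, k2) ^ 2 + m\<^sup>2) ^ 2)))"

end

theory Submission
  imports Defs "HOL-Probability.Sinc_Integral"
begin

(* Both kernels integrate the same weight s(k) (the sinc factor) and the same phase against
   1/(|y|^2 + sigma(k))^2, where sigma is the lattice symbol alpha(k) for Gbar and the continuum
   symbol beta(k) = |k|^2 + m^2 for Gtilde, with m^2 <= alpha <= beta. The difference of the
   integrands is at most 2 s (beta - alpha)/beta * 1/((y1^2 + alpha)(y2^2 + alpha)), whose y-integral
   is 2 pi^2 s (beta - alpha)/(alpha beta). The Taylor bounds sin^2 u <= u^2 and u^2 - sin^2 u <= u^4/3
   give s (beta - alpha)/(alpha beta) <= 2 eps^2/((eps^2 k1^2 + 1)(eps^2 k2^2 + 1)), whose k-integral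
   is 2 pi^2: the powers of eps cancel, and |Gbar - Gtilde| <= 4 pi^4/(2 pi)^4 = 1/4. *)

lemma abs_x_minus_sin_le: fixes x :: real shows "\<bar>x - sin x\<bar> \<le> \<bar>x\<bar>^3 / 6"
  using Maclaurin_sin_bound[of x 3]
  by (simp add: numeral_3_eq_3 sin_coeff_def abs_minus_commute)

lemma sin_sq_le_sq: fixes x :: real shows "(sin x)^2 \<le> x^2"
  using abs_sin_x_le_abs_x[of x] by (metis abs_ge_zero power2_abs power_mono)

lemma sq_minus_sin_sq_le: fixes x :: real shows "x^2 - (sin x)^2 \<le> x^4 / 3"
proof -
  have "x^2 - (sin x)^2 = (x - sin x) * (x + sin x)"
    by (simp add: power2_eq_square algebra_simps)
  also have "\<dots> \<le> \<bar>x - sin x\<bar> * \<bar>x + sin x\<bar>"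
    by (metis abs_ge_self abs_mult)
  also have "\<dots> \<le> (\<bar>x\<bar>^3 / 6) * (2 * \<bar>x\<bar>)"
    using abs_sin_x_le_abs_x[of x] by (intro mult_mono abs_x_minus_sin_le) auto
  also have "\<dots> = x^4 / 3"
    by (simp add: power_def)
  finally show ?thesis .
qed

lemma sin_sq_half_bounds:
  fixes u :: real
  shows "(sin (u/2))^2 \<le> 1" "4 * (sin (u/2))^2 \<le> u^2" "u^2 - 4 * (sin (u/2))^2 \<le> (u^2)^2 / 12"
  using abs_square_le_1[of "sin (u/2)"] sin_sq_le_sq[of "u/2"] sq_minus_sin_sq_le[of "u/2"]
  by (simp_all add: power_divide power_mult_distrib[symmetric] flip: power_mult)

lemma sin_sq_half_div_sq_le: fixes u :: real shows "(sin (u/2))^2 / u^2 \<le> 2 / (u^2 + 1)"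
proof -
  have "(sin (u/2))^2 * u^2 \<le> 1 * u^2"
    using sin_sq_half_bounds(1) by (intro mult_right_mono) auto
  then have "(sin (u/2))^2 * (u^2 + 1) \<le> 2 * u^2"
    using sin_sq_half_bounds(2)[of u] by (simp add: distrib_left) (use zero_le_power2[of u] in linarith)
  then show ?thesis
    by (cases "u = 0") (simp_all add: divide_simps add_pos_nonneg)
qed

definition lattice_symbol :: "real \<Rightarrow> real \<Rightarrow> real \<times> real \<Rightarrow> real" where
  "lattice_symbol m \<epsilon> k =
     4 / \<epsilon>^2 * (sin (\<epsilon> * fst k / 2))^2 + 4 / \<epsilon>^2 * (sin (\<epsilon> * snd k / 2))^2 + m^2"

definition continuum_symbol :: "real \<Rightarrow> real \<times> real \<Rightarrow> real" where
  "continuum_symbol m k = (fst k)^2 + (snd k)^2 + m^2"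

lemma lattice_coordinate_symbol_le: fixes \<epsilon> a :: real shows "4 / \<epsilon>^2 * (sin (\<epsilon> * a / 2))^2 \<le> a^2"
  using sin_sq_le_sq[of "\<epsilon> * a / 2"]
  by (cases "\<epsilon> = 0") (simp_all add: power_divide power_mult_distrib field_simps)

lemma lattice_symbol_le_continuum_symbol: "lattice_symbol m \<epsilon> k \<le> continuum_symbol m k"
  unfolding lattice_symbol_def continuum_symbol_def
  using lattice_coordinate_symbol_le[of \<epsilon> "fst k"] lattice_coordinate_symbol_le[of \<epsilon> "snd k"] by simp

lemma sq_le_lattice_symbol: "m^2 \<le> lattice_symbol m \<epsilon> k"
  unfolding lattice_symbol_def by simp

lemma sinc_factor_nonneg: "0 \<le> sinc_factor \<epsilon> a b"
  unfolding sinc_factor_def by simp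

lemma sinc_factor_sym: "sinc_factor \<epsilon> b a = sinc_factor \<epsilon> a b"
  unfolding sinc_factor_def by (simp add: mult_ac)

lemma sinc_factor_le: "sinc_factor \<epsilon> a b \<le> 4 / ((\<epsilon>^2 * a^2 + 1) * (\<epsilon>^2 * b^2 + 1))"
proof -
  have "sinc_factor \<epsilon> a b = (sin (\<epsilon>*a/2))^2 / (\<epsilon>*a)^2 * ((sin (\<epsilon>*b/2))^2 / (\<epsilon>*b)^2)"
    unfolding sinc_factor_def by (simp add: power_mult_distrib power4_eq_xxxx power2_eq_square mult_ac)
  also have "\<dots> \<le> (2 / ((\<epsilon>*a)^2 + 1)) * (2 / ((\<epsilon>*b)^2 + 1))"
    by (intro mult_mono sin_sq_half_div_sq_le) (auto simp: add_pos_nonneg)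
  finally show ?thesis
    by (simp add: power_mult_distrib)
qed

lemma mul_add_one_le_double:
  fixes P U :: real
  assumes "0 \<le> P" "P \<le> 1" "4 * P \<le> U"
  shows "P * (U + 1) \<le> 2 * U"
proof (cases "U \<le> 1")
  case True
  then have "P * (U + 1) \<le> P * 2" using assms by (intro mult_left_mono) auto
  then show ?thesis using assms by linarith
next
  case False
  then have "P * (U + 1) \<le> U + 1" using assms by (intro mult_left_le_one_le) auto
  then show ?thesis using False by linarith
qed

(* The bound of sinc_factor_mul_defect_le after rescaling by eps: U = (eps a)^2, V = (eps b)^2,
   P = sin^2 (eps a/2), Q = sin^2 (eps b/2), mu = eps^2 m^2. *)
lemma scaled_defect_inequality:
  fixes U V \<mu> P Q :: real
  assumes U: "U > 0" and V: "V > 0" and \<mu>: "\<mu> > 0"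
    and P: "0 \<le> P" "P \<le> 1" "4 * P \<le> U" "U - 4 * P \<le> U^2 / 12"
    and Q: "0 \<le> Q" "Q \<le> 1" "4 * Q \<le> V"
  shows "P * Q * (U - 4 * P) * (U + 1) * (V + 1) \<le> U * V * (4 * P + 4 * Q + \<mu>) * (U + V + \<mu>)"
proof -
  define W where "W = 4 * P + 4 * Q + \<mu>"
  define Z where "Z = U + V + \<mu>"
  have W: "W > 0" "P \<le> W / 4" "Q \<le> W / 4"
    using P Q \<mu> by (auto simp: W_def)
  have defect_le_Z: "U - 4 * P \<le> Z"
    using P V \<mu> by (simp add: Z_def)
  show ?thesis
  proof (cases "V \<ge> 1")
    case True
    have Q_V: "Q * (V + 1) \<le> (W / 4) * (2 * V)"
      using mult_mono[OF W(3), of "V + 1" "2 * V"] True Q W by auto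
    have "P * Q * (U - 4 * P) * (U + 1) * (V + 1) = (P * (U + 1)) * (Q * (V + 1)) * (U - 4 * P)"
      by (simp add: algebra_simps)
    also have "\<dots> \<le> (2 * U) * ((W / 4) * (2 * V)) * Z"
      by (intro mult_mono mul_add_one_le_double Q_V defect_le_Z) (use P Q U V W in auto)
    also have "\<dots> = U * V * W * Z"
      by (simp add: algebra_simps)
    finally show ?thesis unfolding W_def Z_def .
  next
    case False
    have Q_V: "Q * (V + 1) \<le> V / 2"
    proof -
      have "Q * (V + 1) \<le> Q * 2" using Q False by (intro mult_left_mono) auto
      then show ?thesis using Q by linarith
    qed
    have defect_U: "(U - 4 * P) * (U + 1) \<le> 13 / 12 * U^2"
    proof -
      have "(U - 4 * P) * U \<le> U * U" using P U by (intro mult_right_mono) auto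
      moreover have "(U - 4 * P) * (U + 1) = (U - 4 * P) * U + (U - 4 * P)"
        by (simp add: algebra_simps)
      ultimately show ?thesis using P(4) unfolding power2_eq_square by linarith
    qed
    have "P * Q * (U - 4 * P) * (U + 1) * (V + 1) = P * (Q * (V + 1)) * ((U - 4 * P) * (U + 1))"
      by (simp add: algebra_simps)
    also have "\<dots> \<le> (W / 4) * (V / 2) * (13 / 12 * U^2)"
      by (intro mult_mono W(2) Q_V defect_U) (use P Q U V W in auto)
    also have "\<dots> \<le> U * V * W * Z"
    proof -
      have "(U * V * W) * (13 / 96 * U) \<le> (U * V * W) * Z"
        using U V W \<mu> by (intro mult_left_mono) (auto simp: Z_def)
      then show ?thesis by (simp add: algebra_simps power2_eq_square)
    qed
    finally show ?thesis unfolding W_def Z_def .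
  qed
qed

lemma sinc_factor_mul_defect_le:
  fixes \<epsilon> m a b :: real
  assumes \<epsilon>: "\<epsilon> > 0" and m: "m > 0"
  shows "sinc_factor \<epsilon> a b * (a^2 - 4 / \<epsilon>^2 * (sin (\<epsilon> * a / 2))^2)
           / (lattice_symbol m \<epsilon> (a, b) * continuum_symbol m (a, b))
         \<le> \<epsilon>^2 / ((\<epsilon>^2 * a^2 + 1) * (\<epsilon>^2 * b^2 + 1))"
proof (cases "a = 0 \<or> b = 0")
  case True
  then show ?thesis by (auto simp: sinc_factor_def add_pos_nonneg)
next
  case False
  define U where "U = (\<epsilon> * a)^2"
  define V where "V = (\<epsilon> * b)^2"
  define \<mu> where "\<mu> = \<epsilon>^2 * m^2"
  define P where "P = (sin (\<epsilon> * a / 2))^2"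
  define Q where "Q = (sin (\<epsilon> * b / 2))^2"
  have pos: "U > 0" "V > 0" "\<mu> > 0"
    using False \<epsilon> m by (auto simp: U_def V_def \<mu>_def)
  have P: "0 \<le> P" "P \<le> 1" "4 * P \<le> U" "U - 4 * P \<le> U^2 / 12"
    using sin_sq_half_bounds[of "\<epsilon> * a"] by (simp_all add: P_def U_def)
  have Q: "0 \<le> Q" "Q \<le> 1" "4 * Q \<le> V"
    using sin_sq_half_bounds[of "\<epsilon> * b"] by (simp_all add: Q_def V_def)
  have W: "4 * P + 4 * Q + \<mu> > 0" and Z: "U + V + \<mu> > 0"
    using P Q pos by auto
  have sinc: "sinc_factor \<epsilon> a b = P * Q / (U * V)"
    unfolding sinc_factor_def P_def Q_def U_def V_def
    by (simp add: power_mult_distrib mult_ac power2_eq_square power4_eq_xxxx)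
  have defect: "a^2 - 4 / \<epsilon>^2 * (sin (\<epsilon> * a / 2))^2 = (U - 4 * P) / \<epsilon>^2"
    using \<epsilon> by (simp add: P_def U_def power_mult_distrib field_simps)
  have lattice: "lattice_symbol m \<epsilon> (a, b) = (4 * P + 4 * Q + \<mu>) / \<epsilon>^2"
    using \<epsilon> by (simp add: lattice_symbol_def P_def Q_def \<mu>_def field_simps)
  have continuum: "continuum_symbol m (a, b) = (U + V + \<mu>) / \<epsilon>^2"
    using \<epsilon> by (simp add: continuum_symbol_def U_def V_def \<mu>_def power_mult_distrib field_simps)
  have "sinc_factor \<epsilon> a b * (a^2 - 4 / \<epsilon>^2 * (sin (\<epsilon> * a / 2))^2)
          / (lattice_symbol m \<epsilon> (a, b) * continuum_symbol m (a, b))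
        = \<epsilon>^2 * (P * Q * (U - 4 * P) / (U * V * (4 * P + 4 * Q + \<mu>) * (U + V + \<mu>)))"
  proof -
    have scale: "X / (U * V) * (Y / E) / (A / E * (B / E)) = E * (X * Y / (U * V * A * B))"
      if "E \<noteq> 0" for X Y E A B :: real
      using that by (simp add: field_simps)
    show ?thesis
      unfolding sinc defect lattice continuum using \<epsilon> by (intro scale) simp
  qed
  also have "\<dots> \<le> \<epsilon>^2 * (1 / ((U + 1) * (V + 1)))"
    using scaled_defect_inequality[OF pos P Q] pos W Z
    by (intro mult_left_mono) (simp_all add: divide_simps add_pos_pos)
  also have "\<dots> = \<epsilon>^2 / ((\<epsilon>^2 * a^2 + 1) * (\<epsilon>^2 * b^2 + 1))"
    by (simp add: U_def V_def power_mult_distrib)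
  finally show ?thesis .
qed

lemma sinc_factor_mul_symbol_gap_le:
  fixes \<epsilon> m a b :: real
  assumes "\<epsilon> > 0" "m > 0"
  shows "sinc_factor \<epsilon> a b * (continuum_symbol m (a, b) - lattice_symbol m \<epsilon> (a, b))
           / (lattice_symbol m \<epsilon> (a, b) * continuum_symbol m (a, b))
         \<le> 2 * \<epsilon>^2 / ((\<epsilon>^2 * a^2 + 1) * (\<epsilon>^2 * b^2 + 1))"
proof -
  have swap: "lattice_symbol m \<epsilon> (b, a) = lattice_symbol m \<epsilon> (a, b)"
             "continuum_symbol m (b, a) = continuum_symbol m (a, b)"
    by (simp_all add: lattice_symbol_def continuum_symbol_def)
  have "continuum_symbol m (a, b) - lattice_symbol m \<epsilon> (a, b)
        = (a^2 - 4 / \<epsilon>^2 * (sin (\<epsilon> * a / 2))^2) + (b^2 - 4 / \<epsilon>^2 * (sin (\<epsilon> * b / 2))^2)"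
    by (simp add: lattice_symbol_def continuum_symbol_def)
  then show ?thesis
    using sinc_factor_mul_defect_le[OF assms, of a b] sinc_factor_mul_defect_le[OF assms, of b a]
    by (simp add: swap sinc_factor_sym distrib_left add_divide_distrib mult_ac)
qed

lemma nn_integral_inverse_1_plus_square:
  "(\<integral>\<^sup>+x. ennreal (1 / (1 + x^2)) \<partial>lborel) = ennreal pi"
proof -
  have "integrable lborel (\<lambda>x::real. 1 / (1 + x^2))"
    using integrable_inverse_1_plus_square by (simp add: set_integrable_def inverse_eq_divide)
  moreover have "(LINT x|lborel. 1 / (1 + x^2)) = pi"
    using LBINT_inverse_1_plus_square
    by (simp add: interval_lebesgue_integral_def set_lebesgue_integral_def inverse_eq_divide)
  ultimately show ?thesis
    by (subst nn_integral_eq_integral) (auto simp: add_pos_nonneg)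
qed

lemma nn_integral_inverse_quadratic:
  fixes a b :: real
  assumes "a > 0" "b > 0"
  shows "(\<integral>\<^sup>+x. ennreal (1 / (a * x^2 + b)) \<partial>lborel) = ennreal (pi / sqrt (a * b))"
proof -
  define c where "c = sqrt (b / a)"
  have c: "c > 0" "a * c^2 = b"
    using assms by (auto simp: c_def)
  have "(\<integral>\<^sup>+x. ennreal (1 / (a * x^2 + b)) \<partial>lborel)
      = ennreal c * (\<integral>\<^sup>+t. ennreal (1 / (a * (c * t)^2 + b)) \<partial>lborel)"
    using nn_integral_real_affine[of "\<lambda>x. ennreal (1 / (a * x^2 + b))" c 0] c by simp
  also have "\<dots> = ennreal c * (\<integral>\<^sup>+t. ennreal (1 / b) * ennreal (1 / (1 + t^2)) \<partial>lborel)"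
    using c assms by (intro arg_cong2[where f="(*)"] nn_integral_cong refl)
      (simp add: power_mult_distrib field_simps ennreal_mult[symmetric] add_pos_nonneg flip: c(2))
  also have "\<dots> = ennreal c * (ennreal (1 / b) * ennreal pi)"
    by (subst nn_integral_cmult) (auto simp: nn_integral_inverse_1_plus_square)
  also have "\<dots> = ennreal (c / b * pi)"
    using c assms by (simp add: ennreal_mult[symmetric])
  also have "c / b * pi = pi / sqrt (a * b)"
    using assms by (simp add: c_def real_sqrt_divide real_sqrt_mult field_simps)
  finally show ?thesis .
qed

lemma nn_integral_lborel_prod_mult:
  fixes f :: "'a::euclidean_space \<Rightarrow> ennreal" and g :: "'b::euclidean_space \<Rightarrow> ennreal"
  assumes [measurable]: "f \<in> borel_measurable borel" "g \<in> borel_measurable borel"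
  shows "(\<integral>\<^sup>+p. f (fst p) * g (snd p) \<partial>lborel) = (\<integral>\<^sup>+x. f x \<partial>lborel) * (\<integral>\<^sup>+y. g y \<partial>lborel)"
proof -
  have "(\<integral>\<^sup>+p. f (fst p) * g (snd p) \<partial>lborel) = (\<integral>\<^sup>+x. \<integral>\<^sup>+y. f x * g y \<partial>lborel \<partial>lborel)"
    by (subst lborel_prod[symmetric], subst lborel.nn_integral_fst[symmetric]) auto
  also have "\<dots> = (\<integral>\<^sup>+x. f x * (\<integral>\<^sup>+y. g y \<partial>lborel) \<partial>lborel)"
    by (intro nn_integral_cong nn_integral_cmult) auto
  also have "\<dots> = (\<integral>\<^sup>+x. f x \<partial>lborel) * (\<integral>\<^sup>+y. g y \<partial>lborel)"
    by (intro nn_integral_multc) auto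
  finally show ?thesis .
qed

lemma nn_integral_inverse_quadratic_prod:
  fixes a b :: real
  assumes "a > 0" "b > 0"
  shows "(\<integral>\<^sup>+y. ennreal (1 / ((a * (fst y)^2 + b) * (a * (snd y)^2 + b))) \<partial>(lborel :: (real \<times> real) measure))
         = ennreal (pi^2 / (a * b))"
proof -
  have "(\<integral>\<^sup>+y. ennreal (1 / ((a * (fst y)^2 + b) * (a * (snd y)^2 + b))) \<partial>(lborel :: (real \<times> real) measure))
      = (\<integral>\<^sup>+y. ennreal (1 / (a * (fst y)^2 + b)) * ennreal (1 / (a * (snd y)^2 + b)) \<partial>lborel)"
    using assms by (intro nn_integral_cong) (simp add: ennreal_mult[symmetric] add_pos_nonneg)
  also have "\<dots> = ennreal (pi / sqrt (a * b)) * ennreal (pi / sqrt (a * b))"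
    using assms by (subst nn_integral_lborel_prod_mult) (auto simp: nn_integral_inverse_quadratic)
  also have "\<dots> = ennreal (pi^2 / (a * b))"
    using assms by (simp add: ennreal_mult[symmetric] power2_eq_square)
  finally show ?thesis .
qed

lemma inverse_sq_le_inverse_mult:
  fixes s t c D :: real
  assumes "0 \<le> s" "0 \<le> t" "0 < c" "s + t + c \<le> D"
  shows "1 / D^2 \<le> 1 / ((s + c) * (t + c))"
proof -
  have "(s + c) * (t + c) \<le> (s + t + c)^2"
    using assms by (simp add: power2_eq_square algebra_simps)
  also have "\<dots> \<le> D^2"
    using assms by (intro power_mono) auto
  finally show ?thesis
    using assms by (intro divide_left_mono) auto
qed

lemma inverse_sq_diff_le:
  fixes t \<alpha> \<beta> :: real
  assumes "0 \<le> t" "0 < \<alpha>" "\<alpha> \<le> \<beta>"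
  shows "1 / (t + \<alpha>)^2 - 1 / (t + \<beta>)^2 \<le> 2 * (\<beta> - \<alpha>) / \<beta> * (1 / (t + \<alpha>)^2)"
proof -
  define A B where "A = t + \<alpha>" and "B = t + \<beta>"
  have AB: "0 < A" "A \<le> B" "\<beta> \<le> B"
    using assms by (auto simp: A_def B_def)
  have "1 / A^2 - 1 / B^2 = (B - A) * ((B + A) / B^2) * (1 / A^2)"
    using AB by (simp add: field_simps power2_eq_square)
  also have "\<dots> \<le> (\<beta> - \<alpha>) * (2 / \<beta>) * (1 / A^2)"
  proof (intro mult_right_mono mult_mono)
    have "(B + A) / B^2 \<le> 2 * B / B^2"
      using AB by (intro divide_right_mono) auto
    also have "\<dots> \<le> 2 / \<beta>"
      using AB assms by (simp add: power2_eq_square divide_left_mono)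
    finally show "(B + A) / B^2 \<le> 2 / \<beta>" .
  qed (use assms in \<open>auto simp: A_def B_def\<close>)
  finally show ?thesis
    by (simp add: A_def B_def mult.commute)
qed

(* The measurability prover knows fst and snd only on product measures, not on the Borel sets of
   a product type, which is what lborel on real \<times> real reduces to. *)
lemma borel_measurable_fst_snd[measurable]:
  "fst \<in> borel_measurable (borel :: ('a::euclidean_space \<times> 'b::euclidean_space) measure)"
  "snd \<in> borel_measurable (borel :: ('a::euclidean_space \<times> 'b::euclidean_space) measure)"
  by (simp_all add: borel_measurable_continuous_onI continuous_on_fst continuous_on_snd)

definition propagator_integrand ::
    "(real \<times> real \<Rightarrow> real) \<Rightarrow> (real \<times> real \<Rightarrow> real) \<Rightarrow> real \<times> real \<Rightarrow> real \<times> real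
      \<Rightarrow> (real \<times> real) \<times> (real \<times> real) \<Rightarrow> complex" where
  "propagator_integrand s \<sigma> x z p =
     complex_of_real (s (snd p)) * exp (- \<i> * complex_of_real (x \<bullet> fst p + snd p \<bullet> z)) /
     complex_of_real ((norm (fst p) ^ 2 + \<sigma> (snd p)) ^ 2)"

lemma borel_measurable_propagator_integrand[measurable]:
  assumes [measurable]: "s \<in> borel_measurable borel" "\<sigma> \<in> borel_measurable borel"
  shows "propagator_integrand s \<sigma> x z \<in> borel_measurable lborel"
  unfolding propagator_integrand_def by (subst lborel_prod[symmetric]) measurable

lemma propagator_integrand_eq:
  "propagator_integrand s \<sigma> x z p =
     exp (- \<i> * complex_of_real (x \<bullet> fst p + snd p \<bullet> z)) *
     complex_of_real (s (snd p) / (norm (fst p) ^ 2 + \<sigma> (snd p)) ^ 2)"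
  unfolding propagator_integrand_def by (simp add: divide_inverse)

lemma norm_propagator_integrand_diff:
  "norm (propagator_integrand s \<alpha> x z p - propagator_integrand s \<beta> x z p) =
     \<bar>s (snd p) * (1 / (norm (fst p) ^ 2 + \<alpha> (snd p)) ^ 2 - 1 / (norm (fst p) ^ 2 + \<beta> (snd p)) ^ 2)\<bar>"
  unfolding propagator_integrand_eq right_diff_distrib[symmetric] of_real_diff[symmetric] norm_mult norm_of_real
  by (simp add: norm_exp_eq_Re right_diff_distrib)

lemma norm_propagator_integrand_le:
  assumes "0 \<le> s (snd p)" "0 < \<mu>" "\<mu> \<le> \<sigma> (snd p)"
  shows "norm (propagator_integrand s \<sigma> x z p)
         \<le> s (snd p) * (1 / (((fst (fst p))^2 + \<mu>) * ((snd (fst p))^2 + \<mu>)))"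
proof -
  have "norm (propagator_integrand s \<sigma> x z p) = s (snd p) * (1 / (norm (fst p) ^ 2 + \<sigma> (snd p)) ^ 2)"
    using assms unfolding propagator_integrand_eq norm_mult norm_of_real by (simp add: norm_exp_eq_Re)
  also have "\<dots> \<le> s (snd p) * (1 / (((fst (fst p))^2 + \<mu>) * ((snd (fst p))^2 + \<mu>)))"
    using assms by (intro mult_left_mono inverse_sq_le_inverse_mult) (auto simp: norm_prod_def)
  finally show ?thesis .
qed

lemma integrable_propagator_integrand:
  assumes [measurable]: "s \<in> borel_measurable borel" "\<sigma> \<in> borel_measurable borel"
    and s: "\<And>k. 0 \<le> s k" "(\<integral>\<^sup>+k. s k \<partial>lborel) < \<infinity>"
    and \<sigma>: "0 < \<mu>" "\<And>k. \<mu> \<le> \<sigma> k"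
  shows "integrable lborel (propagator_integrand s \<sigma> x z)"
proof (rule integrableI_bounded)
  let ?Y = "\<lambda>y :: real \<times> real. 1 / (((fst y)^2 + \<mu>) * ((snd y)^2 + \<mu>))"
  have [measurable]: "?Y \<in> borel_measurable borel"
    by measurable
  have Y_integral: "(\<integral>\<^sup>+y. ennreal (?Y y) \<partial>lborel) = ennreal (pi^2 / \<mu>)"
    using nn_integral_inverse_quadratic_prod[of 1 \<mu>] \<sigma> by simp
  have "(\<integral>\<^sup>+p. norm (propagator_integrand s \<sigma> x z p) \<partial>lborel)
        \<le> (\<integral>\<^sup>+p. ennreal (?Y (fst p)) * ennreal (s (snd p)) \<partial>lborel)"
    using s \<sigma> norm_propagator_integrand_le[of s _ \<mu> \<sigma> x z]
    by (intro nn_integral_mono) (simp add: ennreal_mult[symmetric] add_pos_nonneg mult.commute)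
  also have "\<dots> = ennreal (pi^2 / \<mu>) * (\<integral>\<^sup>+k. s k \<partial>lborel)"
    using Y_integral by (subst nn_integral_lborel_prod_mult) simp_all
  also have "\<dots> < \<infinity>"
    using s by (simp add: ennreal_mult_less_top)
  finally show "(\<integral>\<^sup>+p. norm (propagator_integrand s \<sigma> x z p) \<partial>lborel) < \<infinity>" .
qed simp

lemma norm_propagator_integrand_diff_le:
  assumes "0 \<le> s (snd p)" "0 < \<alpha> (snd p)" "\<alpha> (snd p) \<le> \<beta> (snd p)"
  shows "norm (propagator_integrand s \<alpha> x z p - propagator_integrand s \<beta> x z p)
         \<le> s (snd p) * (2 * (\<beta> (snd p) - \<alpha> (snd p)) / \<beta> (snd p))
             * (1 / (((fst (fst p))^2 + \<alpha> (snd p)) * ((snd (fst p))^2 + \<alpha> (snd p))))"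
proof -
  let ?t = "norm (fst p) ^ 2" and ?k = "snd p"
  have "0 < ?t + \<alpha> ?k"
    using assms by (simp add: add_nonneg_pos)
  then have "1 / (?t + \<beta> ?k)^2 \<le> 1 / (?t + \<alpha> ?k)^2"
    using assms by (intro divide_left_mono power_mono) auto
  then have "norm (propagator_integrand s \<alpha> x z p - propagator_integrand s \<beta> x z p)
             = s ?k * (1 / (?t + \<alpha> ?k)^2 - 1 / (?t + \<beta> ?k)^2)"
    using assms by (simp add: norm_propagator_integrand_diff)
  also have "\<dots> \<le> s ?k * (2 * (\<beta> ?k - \<alpha> ?k) / \<beta> ?k * (1 / (?t + \<alpha> ?k)^2))"
    using assms by (intro mult_left_mono inverse_sq_diff_le) auto
  also have "\<dots> \<le> s ?k * (2 * (\<beta> ?k - \<alpha> ?k) / \<beta> ?k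
                  * (1 / (((fst (fst p))^2 + \<alpha> ?k) * ((snd (fst p))^2 + \<alpha> ?k))))"
    using assms by (intro mult_left_mono inverse_sq_le_inverse_mult) (auto simp: norm_prod_def)
  finally show ?thesis
    by (simp only: mult.assoc)
qed

lemma nn_integral_norm_propagator_integrand_diff_le:
  assumes [measurable]: "s \<in> borel_measurable borel" "\<alpha> \<in> borel_measurable borel" "\<beta> \<in> borel_measurable borel"
    and "\<And>k. 0 \<le> s k" "\<And>k. 0 < \<alpha> k" "\<And>k. \<alpha> k \<le> \<beta> k"
  shows "(\<integral>\<^sup>+p. norm (propagator_integrand s \<alpha> x z p - propagator_integrand s \<beta> x z p) \<partial>lborel)
         \<le> (\<integral>\<^sup>+k. ennreal (2 * pi^2 * (s k * (\<beta> k - \<alpha> k) / (\<alpha> k * \<beta> k))) \<partial>lborel)"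
proof -
  define c where "c k = s k * (2 * (\<beta> k - \<alpha> k) / \<beta> k)" for k
  define Y where "Y k y = 1 / (((fst y)^2 + \<alpha> k) * ((snd y)^2 + \<alpha> k))"
    for k y :: "real \<times> real"
  have c: "0 \<le> c k" for k
    using assms(4-6)[of k] by (simp add: c_def)
  have pointwise: "norm (propagator_integrand s \<alpha> x z p - propagator_integrand s \<beta> x z p)
                   \<le> c (snd p) * Y (snd p) (fst p)" for p
    unfolding c_def Y_def using assms(4-6) by (rule norm_propagator_integrand_diff_le)
  have "(\<integral>\<^sup>+p. norm (propagator_integrand s \<alpha> x z p - propagator_integrand s \<beta> x z p) \<partial>lborel)
        \<le> (\<integral>\<^sup>+p. ennreal (c (snd p) * Y (snd p) (fst p)) \<partial>(lborel \<Otimes>\<^sub>M lborel))"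
    unfolding lborel_prod by (intro nn_integral_mono ennreal_leI pointwise)
  also have "\<dots> = (\<integral>\<^sup>+k. \<integral>\<^sup>+y. ennreal (c k * Y k y) \<partial>lborel \<partial>lborel)"
  proof -
    have "(\<lambda>p. ennreal (c (snd p) * Y (snd p) (fst p))) \<in> borel_measurable (lborel \<Otimes>\<^sub>M lborel)"
      unfolding c_def Y_def by measurable
    from lborel_pair.nn_integral_snd[OF this] show ?thesis
      by simp
  qed
  also have "\<dots> = (\<integral>\<^sup>+k. ennreal (c k) * ennreal (pi^2 / \<alpha> k) \<partial>lborel)"
  proof (intro nn_integral_cong)
    fix k
    have "(\<integral>\<^sup>+y. ennreal (c k * Y k y) \<partial>lborel) = (\<integral>\<^sup>+y. ennreal (c k) * ennreal (Y k y) \<partial>lborel)"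
      using c assms(5)[of k] by (intro nn_integral_cong ennreal_mult) (auto simp: Y_def add_pos_nonneg)
    also have "\<dots> = ennreal (c k) * (\<integral>\<^sup>+y. ennreal (Y k y) \<partial>lborel)"
      unfolding Y_def by (rule nn_integral_cmult) measurable
    also have "(\<integral>\<^sup>+y. ennreal (Y k y) \<partial>lborel) = ennreal (pi^2 / \<alpha> k)"
      using assms(5)[of k] nn_integral_inverse_quadratic_prod[of 1 "\<alpha> k"] by (simp add: Y_def)
    finally show "(\<integral>\<^sup>+y. ennreal (c k * Y k y) \<partial>lborel) = ennreal (c k) * ennreal (pi^2 / \<alpha> k)" .
  qed
  also have "\<dots> = (\<integral>\<^sup>+k. ennreal (2 * pi^2 * (s k * (\<beta> k - \<alpha> k) / (\<alpha> k * \<beta> k))) \<partial>lborel)"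
    using c assms(5) by (intro nn_integral_cong) (simp add: ennreal_mult[symmetric] c_def field_simps)
  finally show ?thesis .
qed

lemma Gbar_eq:
  "Gbar m \<epsilon> x z = complex_of_real (1 / (2 * pi) ^ 4) *
     (LINT p|lborel. propagator_integrand (\<lambda>k. sinc_factor \<epsilon> (fst k) (snd k)) (lattice_symbol m \<epsilon>) x z p)"
  unfolding Gbar_def propagator_integrand_def lattice_symbol_def by (simp add: case_prod_beta' add.assoc)

lemma Gtilde_eq:
  "Gtilde m \<epsilon> x z = complex_of_real (1 / (2 * pi) ^ 4) *
     (LINT p|lborel. propagator_integrand (\<lambda>k. sinc_factor \<epsilon> (fst k) (snd k)) (continuum_symbol m) x z p)"
  unfolding Gtilde_def propagator_integrand_def continuum_symbol_def by (simp add: case_prod_beta' norm_Pair add.assoc)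

lemma nn_integral_sinc_factor_le:
  assumes "\<epsilon> > 0"
  shows "(\<integral>\<^sup>+k. ennreal (sinc_factor \<epsilon> (fst k) (snd k)) \<partial>lborel) \<le> ennreal (4 * pi^2 / \<epsilon>^2)"
proof -
  define \<Phi> where "\<Phi> k = 1 / ((\<epsilon>^2 * (fst k)^2 + 1) * (\<epsilon>^2 * (snd k)^2 + 1))" for k :: "real \<times> real"
  have "(\<integral>\<^sup>+k. ennreal (sinc_factor \<epsilon> (fst k) (snd k)) \<partial>lborel) \<le> (\<integral>\<^sup>+k. ennreal (4 * \<Phi> k) \<partial>lborel)"
    using sinc_factor_le by (intro nn_integral_mono ennreal_leI) (simp add: \<Phi>_def)
  also have "\<dots> = (\<integral>\<^sup>+k. ennreal 4 * ennreal (\<Phi> k) \<partial>lborel)"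
    by (intro nn_integral_cong ennreal_mult) (auto simp: \<Phi>_def add_pos_nonneg)
  also have "\<dots> = ennreal 4 * ennreal (pi^2 / \<epsilon>^2)"
    using assms nn_integral_inverse_quadratic_prod[of "\<epsilon>^2" 1] unfolding \<Phi>_def
    by (subst nn_integral_cmult) simp_all
  also have "\<dots> = ennreal (4 * pi^2 / \<epsilon>^2)"
    by (subst ennreal_mult[symmetric]) auto
  finally show ?thesis .
qed

lemma borel_measurable_symbols[measurable]:
  "(\<lambda>k. sinc_factor \<epsilon> (fst k) (snd k)) \<in> borel_measurable borel"
  "lattice_symbol m \<epsilon> \<in> borel_measurable borel"
  "continuum_symbol m \<in> borel_measurable borel"
  unfolding sinc_factor_def lattice_symbol_def continuum_symbol_def by measurable

lemma nn_integral_norm_lattice_continuum_diff_le: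
  fixes m \<epsilon> :: real
  assumes "m > 0" "\<epsilon> > 0"
  shows "(\<integral>\<^sup>+p. norm (propagator_integrand (\<lambda>k. sinc_factor \<epsilon> (fst k) (snd k)) (lattice_symbol m \<epsilon>) x z p
                      - propagator_integrand (\<lambda>k. sinc_factor \<epsilon> (fst k) (snd k)) (continuum_symbol m) x z p)
            \<partial>lborel) \<le> ennreal (4 * pi^4)"
proof -
  let ?s = "\<lambda>k. sinc_factor \<epsilon> (fst k) (snd k)" and ?\<alpha> = "lattice_symbol m \<epsilon>" and ?\<beta> = "continuum_symbol m"
  define \<Phi> where "\<Phi> k = 1 / ((\<epsilon>^2 * (fst k)^2 + 1) * (\<epsilon>^2 * (snd k)^2 + 1))" for k :: "real \<times> real"
  have \<alpha>: "0 < ?\<alpha> k" for k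
    using assms by (intro less_le_trans[OF _ sq_le_lattice_symbol]) simp
  have "(\<integral>\<^sup>+p. norm (propagator_integrand ?s ?\<alpha> x z p - propagator_integrand ?s ?\<beta> x z p) \<partial>lborel)
        \<le> (\<integral>\<^sup>+k. ennreal (2 * pi^2 * (?s k * (?\<beta> k - ?\<alpha> k) / (?\<alpha> k * ?\<beta> k))) \<partial>lborel)"
    using \<alpha> by (intro nn_integral_norm_propagator_integrand_diff_le)
      (simp_all add: sinc_factor_nonneg lattice_symbol_le_continuum_symbol)
  also have "\<dots> \<le> (\<integral>\<^sup>+k. ennreal (4 * pi^2 * \<epsilon>^2) * ennreal (\<Phi> k) \<partial>lborel)"
  proof (intro nn_integral_mono)
    fix k :: "real \<times> real"
    have "2 * pi^2 * (?s k * (?\<beta> k - ?\<alpha> k) / (?\<alpha> k * ?\<beta> k)) \<le> 2 * pi^2 * (2 * \<epsilon>^2 * \<Phi> k)"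
      using sinc_factor_mul_symbol_gap_le[OF assms(2,1), of "fst k" "snd k"]
      by (intro mult_left_mono) (simp_all add: \<Phi>_def)
    then show "ennreal (2 * pi^2 * (?s k * (?\<beta> k - ?\<alpha> k) / (?\<alpha> k * ?\<beta> k)))
               \<le> ennreal (4 * pi^2 * \<epsilon>^2) * ennreal (\<Phi> k)"
      by (subst ennreal_mult[symmetric]) (auto simp: \<Phi>_def add_pos_nonneg intro!: ennreal_leI)
  qed
  also have "\<dots> = ennreal (4 * pi^2 * \<epsilon>^2) * ennreal (pi^2 / \<epsilon>^2)"
    using assms nn_integral_inverse_quadratic_prod[of "\<epsilon>^2" 1] unfolding \<Phi>_def
    by (subst nn_integral_cmult) simp_all
  also have "\<dots> = ennreal (4 * pi^4)"
    using assms by (subst ennreal_mult[symmetric]) (auto simp: field_simps power4_eq_xxxx power2_eq_square)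
  finally show ?thesis .
qed

lemma norm_Gbar_minus_Gtilde_le:
  fixes m \<epsilon> :: real
  assumes "m > 0" "\<epsilon> > 0"
  shows "cmod (Gbar m \<epsilon> x z - Gtilde m \<epsilon> x z) \<le> 1 / 4"
proof -
  let ?s = "\<lambda>k. sinc_factor \<epsilon> (fst k) (snd k)"
  let ?F = "propagator_integrand ?s (lattice_symbol m \<epsilon>) x z"
  let ?G = "propagator_integrand ?s (continuum_symbol m) x z"
  have s_finite: "(\<integral>\<^sup>+k. ?s k \<partial>lborel) < \<infinity>"
    using nn_integral_sinc_factor_le[OF assms(2)] by (simp add: le_less_trans)
  have "0 < m^2" "\<And>k. m^2 \<le> lattice_symbol m \<epsilon> k" "\<And>k. m^2 \<le> continuum_symbol m k"
    using assms by (simp_all add: sq_le_lattice_symbol continuum_symbol_def)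
  then have integrable: "integrable lborel ?F" "integrable lborel ?G"
    using s_finite by (auto intro!: integrable_propagator_integrand simp: sinc_factor_nonneg)
  have "ennreal (norm (LINT p|lborel. ?F p - ?G p)) \<le> ennreal (4 * pi^4)"
    using integral_norm_bound_ennreal[OF Bochner_Integration.integrable_diff[OF integrable]]
      nn_integral_norm_lattice_continuum_diff_le[OF assms]
    by (rule order_trans)
  then have integral_bound: "norm (LINT p|lborel. ?F p - ?G p) \<le> 4 * pi^4"
    by (simp add: ennreal_le_iff)
  have "Gbar m \<epsilon> x z - Gtilde m \<epsilon> x z = complex_of_real (1 / (2 * pi) ^ 4) * (LINT p|lborel. ?F p - ?G p)"
    unfolding Gbar_eq Gtilde_eq Bochner_Integration.integral_diff[OF integrable] by (simp add: algebra_simps)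
  then have "cmod (Gbar m \<epsilon> x z - Gtilde m \<epsilon> x z) = 1 / (2 * pi) ^ 4 * norm (LINT p|lborel. ?F p - ?G p)"
    by (simp only: norm_mult norm_of_real) simp
  also have "\<dots> \<le> 1 / (2 * pi) ^ 4 * (4 * pi^4)"
    using integral_bound by (intro mult_left_mono) auto
  also have "\<dots> = 1 / 4"
    by (simp add: power_mult_distrib)
  finally show ?thesis .
qed

theorem mainTheorem14:
  fixes m :: real
  assumes "m > 0"
  shows "\<exists>C2 > 0. \<forall>\<epsilon> \<in> {0<..1}. \<forall>x z :: real \<times> real.
           cmod (Gbar m \<epsilon> x z - Gtilde m \<epsilon> x z) \<le> C2"
  using norm_Gbar_minus_Gtilde_le[OF assms] by (intro exI[of _ "1 / 4"]) auto

end
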